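(* Let $\mathcal{C}$ be a class of instances and let $K\in\{\mathbb{B},\mathbb{N}\}$. Then $\mathcal{C}$ admits a left query algorithm over $K$ if and only if $\mathcal{C}$ admits a left query algorithm $(\mathcal{F},X)$ over $K$ in which every instance in $\mathcal{F}$ is connected.
   Context: A schema is a finite set of relation symbols, each with a positive arity. An instance $A$ over a schema $\sigma$ assigns to each $R\in\sigma$ of arity $r$ a finite $r$-ary relation $R^A$; its facts are the tuples in these relations, and $\mathrm{adom}(A)$ is the set of elements occurring in its facts. A homomorphism $h:A\to B$ is a map $h:\mathrm{adom}(A)\to\mathrm{adom}(B)$ such that $(a_1,\dots,a_r)\in R^A$ implies $(h(a_1),\dots,h(a_r))\in R^B$ for every $R\in\sigma$; we write $A\to B$ if one exists. A class of instances is a collection of instances over a fixed schema that is closed under isomorphism. $\mathbb{N}$ is the semiring of non-negative integers and $\mathbb{B}$ the Boolean semiring on $\{0,1\}$. $\hom_{\mathbb{N}}(A,B)$ is the number of homomorphisms from $A$ to $B$; $\hom_{\mathbb{B}}(A,B)=1$ if $A\to B$ and $0$ otherwise. For a finite set $\mathcal{F}=\{F_1,\dots,F_k\}$ of instances, $\hom_K(\mathcal{F},A)=(\hom_K(F_1,A),\dots,\hom_K(F_k,A))$ and $\hom_K(A,\mathcal{F})=(\hom_K(A,F_1),\dots,\hom_K(A,F_k))$. A left $k$-query algorithm over $K$ for $\mathcal{C}$ is a pair $(\mathcal{F},X)$ with $\mathcal{F}$ a set of $k$ instances and $X$ a set of $k$-tuples over $K$ (no effectiveness required) such that for every instance $D$: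 $D\in\mathcal{C}$ iff $\hom_K(\mathcal{F},D)\in X$. A right $k$-query algorithm is defined the same way using $\hom_K(D,\mathcal{F})$. $\mathcal{C}$ admits a left (right) query algorithm over $K$ if it has a left (right) $k$-query algorithm over $K$ for some $k>0$. The incidence multigraph of $A$ is the bipartite multigraph with parts $\mathrm{adom}(A)$ and $\{(R,t): R\in\sigma, t\in R^A\}$, with an edge $(a,(R,t))$ for each occurrence of $a$ as an entry of $t$. A path in $A$ is a sequence $a_0,\dots,a_n$ of elements such that there are $b_1,\dots,b_n$ with $a_0,b_1,a_1,\dots,b_n,a_n$ a path in the incidence multigraph (not traversing an edge twice in succession in opposite directions); $A$ is connected if any two elements of $\mathrm{adom}(A)$ are joined by a path. *)

theory Defs
  imports "HOL-Library.FuncSet"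
begin

type_synonym ('r, 'a) inst = "'r \<Rightarrow> 'a list set"

definition schema :: "'r set \<Rightarrow> ('r \<Rightarrow> nat) \<Rightarrow> bool" where
  "schema sig ar \<longleftrightarrow> finite sig \<and> (\<forall>R\<in>sig. ar R > 0)"

definition is_instance :: "'r set \<Rightarrow> ('r \<Rightarrow> nat) \<Rightarrow> ('r, 'a) inst \<Rightarrow> bool" where
  "is_instance sig ar A \<longleftrightarrow>
     (\<forall>R. R \<notin> sig \<longrightarrow> A R = {}) \<and>
     (\<forall>R. finite (A R)) \<and>
     (\<forall>R. \<forall>t\<in>A R. length t = ar R)"

definition adom :: "('r, 'a) inst \<Rightarrow> 'a set" where
  "adom A = (\<Union>R. \<Union>t\<in>A R. set t)"

definition homs :: "('r, 'a) inst \<Rightarrow> ('r, 'b) inst \<Rightarrow> ('a \<Rightarrow> 'b) set" where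
  "homs A B = {h. h \<in> adom A \<rightarrow>\<^sub>E adom B \<and> (\<forall>R. \<forall>t\<in>A R. map h t \<in> B R)}"

datatype semiring_K = KB | KN

definition hom_K :: "semiring_K \<Rightarrow> ('r, 'a) inst \<Rightarrow> ('r, 'b) inst \<Rightarrow> nat" where
  "hom_K K A B = (case K of
       KN \<Rightarrow> card (homs A B)
     | KB \<Rightarrow> (if homs A B \<noteq> {} then 1 else 0))"

definition isomorphic :: "('r, 'a) inst \<Rightarrow> ('r, 'b) inst \<Rightarrow> bool" where
  "isomorphic A B \<longleftrightarrow> (\<exists>h. bij_betw h (adom A) (adom B) \<and>
      (\<forall>R t. set t \<subseteq> adom A \<longrightarrow> (t \<in> A R \<longleftrightarrow> map h t \<in> B R)))"

definition is_class :: "'r set \<Rightarrow> ('r \<Rightarrow> nat) \<Rightarrow> ('r, 'a) inst set \<Rightarrow> bool" where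
  "is_class sig ar C \<longleftrightarrow>
     (\<forall>A\<in>C. is_instance sig ar A) \<and>
     (\<forall>A B. A \<in> C \<longrightarrow> is_instance sig ar B \<longrightarrow> isomorphic A B \<longrightarrow> B \<in> C)"

text \<open>Left k-query algorithm (F, X): F is a set of k instances, listed as a distinct
  list Fs of length k (fixing the order of coordinates), and X a set of k-tuples
  (lists of length k) over K (values in nat; for B only 0/1 occur).\<close>
definition left_query_alg ::
  "'r set \<Rightarrow> ('r \<Rightarrow> nat) \<Rightarrow> semiring_K \<Rightarrow> ('r, 'a) inst set \<Rightarrow> nat
     \<Rightarrow> ('r, 'a) inst list \<Rightarrow> nat list set \<Rightarrow> bool" where
  "left_query_alg sig ar K C k Fs X \<longleftrightarrow>
     length Fs = k \<and> distinct Fs \<and> (\<forall>F\<in>set Fs. is_instance sig ar F) \<and>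
     (\<forall>x\<in>X. length x = k) \<and>
     (K = KB \<longrightarrow> (\<forall>x\<in>X. set x \<subseteq> {0, 1})) \<and>
     (\<forall>D. is_instance sig ar D \<longrightarrow> (D \<in> C \<longleftrightarrow> map (\<lambda>F. hom_K K F D) Fs \<in> X))"

definition admits_left_query_alg ::
  "'r set \<Rightarrow> ('r \<Rightarrow> nat) \<Rightarrow> semiring_K \<Rightarrow> ('r, 'a) inst set \<Rightarrow> bool" where
  "admits_left_query_alg sig ar K C \<longleftrightarrow>
     (\<exists>k>0. \<exists>Fs X. left_query_alg sig ar K C k Fs X)"

text \<open>A path a_0,...,a_n is witnessed by steps (R_i, t_i, p_i, q_i), i = 1..n:
  the incidence path goes a_(i-1) -> (R_i,t_i) along the edge of occurrence p_i and
  (R_i,t_i) -> a_i along the edge of occurrence q_i.  Not traversing an edge twice in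
  succession in opposite directions means p_i \<noteq> q_i, and the exit edge of step i
  differs from the entry edge of step i+1.\<close>
definition is_path :: "('r, 'a) inst \<Rightarrow> 'a list \<Rightarrow> bool" where
  "is_path A xs \<longleftrightarrow> xs \<noteq> [] \<and>
     (\<exists>st :: ('r \<times> 'a list \<times> nat \<times> nat) list.
        length xs = Suc (length st) \<and>
        (\<forall>i<length st. case st ! i of (R, t, p, q) \<Rightarrow>
            t \<in> A R \<and> p < length t \<and> q < length t \<and> p \<noteq> q \<and>
            t ! p = xs ! i \<and> t ! q = xs ! Suc i) \<and>
        (\<forall>i. Suc i < length st \<longrightarrow>
            (case st ! i of (R, t, p, q) \<Rightarrow> case st ! Suc i of (R', t', p', q') \<Rightarrow>
               \<not> (R' = R \<and> t' = t \<and> p' = q))))"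

definition connected_inst :: "('r, 'a) inst \<Rightarrow> bool" where
  "connected_inst A \<longleftrightarrow>
     (\<forall>a\<in>adom A. \<forall>b\<in>adom A. \<exists>xs. is_path A xs \<and> hd xs = a \<and> last xs = b)"

end

theory Submission
  imports Defs
begin

text \<open>A homomorphism from an instance is the same as an independent choice of homomorphisms
  from its connected components, so over either semiring the value
  \<open>hom(F, D)\<close> is the product of the values \<open>hom(F\<^sub>i, D)\<close> over the components
  \<open>F\<^sub>i\<close> of \<open>F\<close>. Hence the answers of the components of all instances of a query
  algorithm determine its answers, and the components (together with the empty instance, which
  keeps the list nonempty) form a query algorithm consisting of connected instances. Components
  are connected because a chain of elements sharing tuples can be turned into a path that never
  immediately backtracks along an edge of the incidence multigraph.\<close>

definition step_in :: "('r, 'a) inst \<Rightarrow> 'r \<times> 'a list \<times> nat \<times> nat \<Rightarrow> 'a \<Rightarrow> 'a \<Rightarrow> bool" where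
  "step_in A s a b \<longleftrightarrow> (case s of (R, t, p, q) \<Rightarrow>
     t \<in> A R \<and> p < length t \<and> q < length t \<and> p \<noteq> q \<and> t ! p = a \<and> t ! q = b)"

definition backtracks :: "'r \<times> 'a list \<times> nat \<times> nat \<Rightarrow> 'r \<times> 'a list \<times> nat \<times> nat \<Rightarrow> bool" where
  "backtracks s s' \<longleftrightarrow> (case s of (R, t, p, q) \<Rightarrow> case s' of (R', t', p', q') \<Rightarrow>
     R' = R \<and> t' = t \<and> p' = q)"

definition path_steps :: "('r, 'a) inst \<Rightarrow> 'a list \<Rightarrow> ('r \<times> 'a list \<times> nat \<times> nat) list \<Rightarrow> bool" where
  "path_steps A xs st \<longleftrightarrow>
     length xs = Suc (length st) \<and>
     (\<forall>i<length st. step_in A (st ! i) (xs ! i) (xs ! Suc i)) \<and>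
     (\<forall>i. Suc i < length st \<longrightarrow> \<not> backtracks (st ! i) (st ! Suc i))"

lemma is_path_iff_path_steps: "is_path A xs \<longleftrightarrow> (\<exists>st. path_steps A xs st)"
  unfolding is_path_def path_steps_def step_in_def backtracks_def
  by (auto simp: split_def)

lemma path_steps_single: "path_steps A [a] []"
  unfolding path_steps_def by simp

lemma all_less_Suc_iff: "(\<forall>i<Suc n. P i) \<longleftrightarrow> (\<forall>i<n. P i) \<and> P n"
  by (auto simp: less_Suc_eq)

lemma path_steps_snoc:
  "path_steps A (xs @ [x]) (st @ [s]) \<longleftrightarrow>
     path_steps A xs st \<and> step_in A s (last xs) x \<and> (st \<noteq> [] \<longrightarrow> \<not> backtracks (last st) s)"
proof (cases "length xs = Suc (length st)")
  case len: True
  have last_xs: "last xs = xs ! length st"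
    using len by (metis diff_Suc_1 last_conv_nth list.size(3) nat.distinct(1))
  have steps: "(\<forall>i<length (st @ [s]). step_in A ((st @ [s]) ! i) ((xs @ [x]) ! i) ((xs @ [x]) ! Suc i))
      \<longleftrightarrow> (\<forall>i<length st. step_in A (st ! i) (xs ! i) (xs ! Suc i)) \<and> step_in A s (last xs) x"
    unfolding length_append_singleton all_less_Suc_iff using len by (simp add: nth_append last_xs)
  have turns: "(\<forall>i. Suc i < length (st @ [s]) \<longrightarrow> \<not> backtracks ((st @ [s]) ! i) ((st @ [s]) ! Suc i))
      \<longleftrightarrow> (\<forall>i. Suc i < length st \<longrightarrow> \<not> backtracks (st ! i) (st ! Suc i))
          \<and> (st \<noteq> [] \<longrightarrow> \<not> backtracks (last st) s)"
  proof (cases st rule: rev_cases)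
    case (snoc st' s')
    show ?thesis
      unfolding snoc length_append_singleton Suc_less_eq all_less_Suc_iff by (simp add: nth_append)
  qed simp
  show ?thesis
    unfolding path_steps_def steps turns using len by auto
next
  case False
  then show ?thesis unfolding path_steps_def by auto
qed

lemma path_steps_nonempty: "path_steps A xs st \<Longrightarrow> xs \<noteq> []"
  unfolding path_steps_def by auto

lemma path_steps_extend:
  assumes path: "path_steps A xs st" and t: "t \<in> A R" "last xs \<in> set t" "z \<in> set t"
  shows "\<exists>xs' st'. path_steps A xs' st' \<and> hd xs' = hd xs \<and> last xs' = z"
proof -
  obtain p q where p: "p < length t" "t ! p = last xs" and q: "q < length t" "t ! q = z"
    using t by (metis in_set_conv_nth)
  have hd_snoc: "hd (ys @ [y]) = hd ys" if "path_steps A ys st'" for ys y st'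
    using path_steps_nonempty[OF that] by simp
  consider (stay) "p = q"
    | (extend) "p \<noteq> q" "st \<noteq> [] \<longrightarrow> \<not> backtracks (last st) (R, t, p, q)"
    | (turn) st0 p0 where "p \<noteq> q" "st = st0 @ [(R, t, p0, p)]"
    by (cases st rule: rev_cases) (auto simp: backtracks_def)
  then show ?thesis
  proof cases
    case stay
    then show ?thesis using path p q by metis
  next
    case extend
    then have "path_steps A (xs @ [z]) (st @ [(R, t, p, q)])"
      using path t p q by (simp add: path_steps_snoc step_in_def)
    then show ?thesis using hd_snoc[OF path] by auto
  next
    case turn
    txt \<open>The new step would re-enter the tuple along the edge by which the last step left
      it. Instead, the last step is redirected to leave at \<open>q\<close>, or dropped if it entered
      at \<open>q\<close>.\<close>
    obtain ys where xs: "xs = ys @ [last xs]"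
      using path_steps_nonempty[OF path] by (metis append_butlast_last_id)
    have "path_steps A (ys @ [last xs]) (st0 @ [(R, t, p0, p)])"
      using path turn(2) xs by simp
    then have ys: "path_steps A ys st0" "step_in A (R, t, p0, p) (last ys) (last xs)"
      "st0 \<noteq> [] \<longrightarrow> \<not> backtracks (last st0) (R, t, p0, p)"
      unfolding path_steps_snoc by blast+
    show ?thesis
    proof (cases "p0 = q")
      case True
      then have "last ys = z" using ys(2) q by (simp add: step_in_def)
      then show ?thesis using ys(1) xs hd_snoc[OF ys(1)] by metis
    next
      case False
      have turned: "path_steps A (ys @ [z]) (st0 @ [(R, t, p0, q)])"
        using ys False q by (auto simp: path_steps_snoc step_in_def backtracks_def split: prod.splits)
      then show ?thesis using xs hd_snoc[OF ys(1)] hd_snoc[OF turned] by (metis last_snoc)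
    qed
  qed
qed

definition cooccur :: "('r, 'a) inst \<Rightarrow> 'a rel" where
  "cooccur A = {(a, b). \<exists>R. \<exists>t\<in>A R. a \<in> set t \<and> b \<in> set t}"

lemma path_if_cooccur_rtrancl:
  assumes "(a, b) \<in> (cooccur A)\<^sup>*"
  shows "\<exists>xs. is_path A xs \<and> hd xs = a \<and> last xs = b"
  using assms unfolding is_path_iff_path_steps
proof (induction rule: rtrancl_induct)
  case base
  show ?case using path_steps_single by fastforce
next
  case (step y z)
  then obtain xs st where "path_steps A xs st" "hd xs = a" "last xs = y" by blast
  moreover obtain R t where "t \<in> A R" "y \<in> set t" "z \<in> set t"
    using step.hyps(2) unfolding cooccur_def by blast
  ultimately show ?case using path_steps_extend by metis
qed

definition induced :: "('r, 'a) inst \<Rightarrow> 'a set \<Rightarrow> ('r, 'a) inst" where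
  "induced A U = (\<lambda>R. {t \<in> A R. set t \<subseteq> U})"

text \<open>The transitive (not reflexive-transitive) closure is used because \<open>cooccur A\<close> is
  reflexive exactly on \<open>adom A\<close>, which makes its closure an equivalence relation there.\<close>

definition components :: "('r, 'a) inst \<Rightarrow> 'a set set" where
  "components A = adom A // (cooccur A)\<^sup>+"

lemma set_subset_adom: "t \<in> A R \<Longrightarrow> set t \<subseteq> adom A"
  unfolding adom_def by auto

lemma adom_induced_subset: "adom (induced A U) \<subseteq> U"
  unfolding adom_def induced_def by auto

lemma induced_induced: "induced (induced A U) V = induced A (U \<inter> V)"
  unfolding induced_def by auto

lemma induced_adom: "induced A (adom A) = A"
  unfolding induced_def using set_subset_adom by fast

lemma is_instance_induced: "is_instance sig ar A \<Longrightarrow> is_instance sig ar (induced A U)"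
  unfolding is_instance_def induced_def by auto

lemma equiv_cooccur_trancl: "equiv (adom A) ((cooccur A)\<^sup>+)"
proof (rule equivI)
  have "cooccur A \<subseteq> adom A \<times> adom A"
    unfolding cooccur_def adom_def by auto
  then show "(cooccur A)\<^sup>+ \<subseteq> adom A \<times> adom A"
    by (rule trancl_subset_Sigma)
  have "(a, a) \<in> cooccur A" if "a \<in> adom A" for a
    using that unfolding cooccur_def adom_def by blast
  then show "refl_on (adom A) ((cooccur A)\<^sup>+)"
    by (auto simp: refl_on_def)
  show "sym ((cooccur A)\<^sup>+)"
    by (rule sym_trancl) (auto simp: sym_def cooccur_def)
qed (rule trans_trancl)

lemma tuple_subset_component:
  assumes "S \<in> components A" "a \<in> S" "t \<in> A R" "a \<in> set t"
  shows "set t \<subseteq> S"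
proof
  obtain c where S: "S = (cooccur A)\<^sup>+ `` {c}"
    using assms(1) unfolding components_def by (auto elim: quotientE)
  fix b assume "b \<in> set t"
  then have "(a, b) \<in> cooccur A" using assms(3,4) unfolding cooccur_def by blast
  moreover have "(c, a) \<in> (cooccur A)\<^sup>+" using assms(2) S by blast
  ultimately show "b \<in> S" unfolding S by (simp add: trancl_into_trancl)
qed

lemma cooccur_induced_component:
  assumes "S \<in> components A" "a \<in> S" "(a, b) \<in> cooccur A"
  shows "(a, b) \<in> cooccur (induced A S) \<and> b \<in> S"
proof -
  obtain R t where t: "t \<in> A R" "a \<in> set t" "b \<in> set t"
    using assms(3) unfolding cooccur_def by blast
  then have "set t \<subseteq> S" using tuple_subset_component assms(1,2) by metis
  then show ?thesis using t unfolding cooccur_def induced_def by blast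
qed

lemma connected_induced_component:
  assumes S: "S \<in> components A"
  shows "connected_inst (induced A S)"
  unfolding connected_inst_def
proof (intro ballI)
  fix a b assume "a \<in> adom (induced A S)" "b \<in> adom (induced A S)"
  then have a: "a \<in> S" and b: "b \<in> S" by (auto dest: subsetD[OF adom_induced_subset])
  have "S \<in> adom A // (cooccur A)\<^sup>+" using S unfolding components_def .
  then have "(a, b) \<in> (cooccur A)\<^sup>+"
    using quotient_eq_iff[OF equiv_cooccur_trancl _ _ a b] by blast
  then have "(a, b) \<in> (cooccur (induced A S))\<^sup>* \<and> b \<in> S"
  proof (induction rule: trancl_induct)
    case (base b)
    then show ?case using cooccur_induced_component[OF S a] by blast
  next
    case (step b c)
    then have "(b, c) \<in> cooccur (induced A S)" "c \<in> S"
      using cooccur_induced_component[OF S, of b c] by simp_all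
    with step.IH show ?case by (meson rtrancl.rtrancl_into_rtrancl)
  qed
  then show "\<exists>xs. is_path (induced A S) xs \<and> hd xs = a \<and> last xs = b"
    by (simp add: path_if_cooccur_rtrancl)
qed

lemma restrict_in_homs_induced:
  assumes "h \<in> homs A D"
  shows "restrict h (adom (induced A U)) \<in> homs (induced A U) D"
proof -
  have "adom (induced A U) \<subseteq> adom A" unfolding adom_def induced_def by auto
  moreover have "map (restrict h (adom (induced A U))) t \<in> D R" if t: "t \<in> induced A U R" for t R
  proof -
    have "map (restrict h (adom (induced A U))) t = map h t"
      using set_subset_adom[of t "induced A U" R] t by (intro map_cong) auto
    moreover have "map h t \<in> D R" using assms t unfolding homs_def induced_def by auto
    ultimately show ?thesis by (simp only:)
  qed
  ultimately show ?thesis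
    using assms unfolding homs_def by auto
qed

lemma adom_split:
  assumes "\<And>R t. t \<in> A R \<Longrightarrow> set t \<subseteq> U \<or> set t \<subseteq> V"
  shows "adom A = adom (induced A U) \<union> adom (induced A V)"
  using assms unfolding adom_def induced_def by fast

lemma homs_split:
  fixes A :: "('r, 'a) inst" and D :: "('r, 'b) inst"
  assumes disj: "U \<inter> V = {}" and split: "\<And>R t. t \<in> A R \<Longrightarrow> set t \<subseteq> U \<or> set t \<subseteq> V"
  shows "bij_betw (\<lambda>h. (restrict h (adom (induced A U)), restrict h (adom (induced A V))))
           (homs A D) (homs (induced A U) D \<times> homs (induced A V) D)"
proof -
  define A1 where "A1 = adom (induced A U)"
  define A2 where "A2 = adom (induced A V)"
  have adom: "adom A = A1 \<union> A2" unfolding A1_def A2_def by (rule adom_split[OF split])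
  have "A1 \<subseteq> U" "A2 \<subseteq> V" unfolding A1_def A2_def by (rule adom_induced_subset)+
  with disj have A12: "A1 \<inter> A2 = {}" by blast
  have tuples: "set t \<subseteq> A1" if "t \<in> induced A U R" for t R
    unfolding A1_def using that by (rule set_subset_adom)
  have tuples': "set t \<subseteq> A2" if "t \<in> induced A V R" for t R
    unfolding A2_def using that by (rule set_subset_adom)
  define merge :: "('a \<Rightarrow> 'b) \<times> ('a \<Rightarrow> 'b) \<Rightarrow> 'a \<Rightarrow> 'b" where
    "merge = (\<lambda>(h1, h2) x. if x \<in> A1 then h1 x else h2 x)"
  show ?thesis
    unfolding A1_def[symmetric] A2_def[symmetric]
  proof (rule bij_betw_byWitness[where f' = merge])
    show "\<forall>h\<in>homs A D. merge (restrict h A1, restrict h A2) = h"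
    proof
      fix h assume "h \<in> homs A D"
      then have "h \<in> A1 \<union> A2 \<rightarrow>\<^sub>E adom D" unfolding homs_def adom by blast
      then show "merge (restrict h A1, restrict h A2) = h"
        using PiE_arb by (fastforce simp: merge_def)
    qed
    show "\<forall>hh\<in>homs (induced A U) D \<times> homs (induced A V) D.
            (restrict (merge hh) A1, restrict (merge hh) A2) = hh"
    proof
      fix hh assume "hh \<in> homs (induced A U) D \<times> homs (induced A V) D"
      then obtain h1 h2 where hh: "hh = (h1, h2)"
        and "h1 \<in> homs (induced A U) D" "h2 \<in> homs (induced A V) D" by blast
      then have "h1 \<in> A1 \<rightarrow>\<^sub>E adom D" "h2 \<in> A2 \<rightarrow>\<^sub>E adom D"
        unfolding homs_def A1_def A2_def by blast+
      then show "(restrict (merge hh) A1, restrict (merge hh) A2) = hh"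
        unfolding hh using A12 PiE_arb by (fastforce simp: merge_def)
    qed
    show "(\<lambda>h. (restrict h A1, restrict h A2)) ` homs A D
            \<subseteq> homs (induced A U) D \<times> homs (induced A V) D"
      unfolding A1_def A2_def using restrict_in_homs_induced by blast
    show "merge ` (homs (induced A U) D \<times> homs (induced A V) D) \<subseteq> homs A D"
    proof (rule image_subsetI, clarify)
      fix h1 h2 assume h1: "h1 \<in> homs (induced A U) D" and h2: "h2 \<in> homs (induced A V) D"
      have "h1 \<in> A1 \<rightarrow>\<^sub>E adom D" "h2 \<in> A2 \<rightarrow>\<^sub>E adom D"
        using h1 h2 unfolding homs_def A1_def A2_def by blast+
      then have "merge (h1, h2) \<in> adom A \<rightarrow>\<^sub>E adom D"
        unfolding adom merge_def using PiE_arb[of h2 A2] by auto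
      moreover have "map (merge (h1, h2)) t \<in> D R" if t: "t \<in> A R" for R t
      proof (cases "set t \<subseteq> U")
        case True
        then have tU: "t \<in> induced A U R" using t unfolding induced_def by simp
        have "map (merge (h1, h2)) t = map h1 t"
          using tuples[OF tU] unfolding merge_def by (intro map_cong) auto
        moreover have "map h1 t \<in> D R" using h1 tU unfolding homs_def by blast
        ultimately show ?thesis by (simp only:)
      next
        case False
        then have tV: "t \<in> induced A V R" using t split unfolding induced_def by auto
        have "map (merge (h1, h2)) t = map h2 t"
          using tuples'[OF tV] A12 unfolding merge_def by (intro map_cong) auto
        moreover have "map h2 t \<in> D R" using h2 tV unfolding homs_def by blast
        ultimately show ?thesis by (simp only:)
      qed
      ultimately show "merge (h1, h2) \<in> homs A D" unfolding homs_def by blast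
    qed
  qed
qed

lemma hom_K_split:
  fixes A :: "('r, 'a) inst" and D :: "('r, 'b) inst"
  assumes "U \<inter> V = {}" and "\<And>R t. t \<in> A R \<Longrightarrow> set t \<subseteq> U \<or> set t \<subseteq> V"
  shows "hom_K K A D = hom_K K (induced A U) D * hom_K K (induced A V) D"
proof -
  obtain f where bij: "bij_betw f (homs A D) (homs (induced A U) D \<times> homs (induced A V) D)"
    using homs_split[of U V A D] assms by blast
  have "card (homs A D) = card (homs (induced A U) D) * card (homs (induced A V) D)"
    using bij_betw_same_card[OF bij] by (simp add: card_cartesian_product)
  moreover have "homs A D \<noteq> {} \<longleftrightarrow> homs (induced A U) D \<noteq> {} \<and> homs (induced A V) D \<noteq> {}"
    using bij unfolding bij_betw_def by auto
  ultimately show ?thesis unfolding hom_K_def by (cases K) auto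
qed

lemma hom_K_no_tuples:
  assumes "\<And>R. A R = {}"
  shows "hom_K K A D = 1"
proof -
  have "adom A = {}" using assms unfolding adom_def by simp
  then have "homs A D = {\<lambda>x. undefined}" using assms unfolding homs_def by simp
  then show ?thesis unfolding hom_K_def by (cases K) auto
qed

lemma component_disjoint:
  assumes "S \<in> components A" "T \<in> components A" "S \<noteq> T"
  shows "S \<inter> T = {}"
  using quotient_disj[OF equiv_cooccur_trancl] assms unfolding components_def by blast

lemma hom_K_induced_Union_components:
  assumes nonempty: "\<And>R. [] \<notin> A R" and "finite SS" "SS \<subseteq> components A"
  shows "hom_K K (induced A (\<Union>SS)) D = (\<Prod>S\<in>SS. hom_K K (induced A S) D)"
  using assms(2,3)
proof (induction SS rule: finite_induct)
  case empty
  have "induced A {} R = {}" for R using nonempty unfolding induced_def by auto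
  then show ?case by (simp add: hom_K_no_tuples)
next
  case (insert S SS)
  then have S: "S \<in> components A" and SS: "SS \<subseteq> components A" by auto
  have "S \<inter> \<Union>SS = {}"
    using component_disjoint[OF S] SS insert.hyps(2) by blast
  moreover have "set t \<subseteq> S \<or> set t \<subseteq> \<Union>SS" if "t \<in> induced A (S \<union> \<Union>SS) R" for R t
  proof -
    from that have t: "t \<in> A R" "set t \<subseteq> S \<union> \<Union>SS" unfolding induced_def by auto
    then obtain a where a: "a \<in> set t" using nonempty by (cases t) auto
    then consider "a \<in> S" | T where "T \<in> SS" "a \<in> T" using t(2) by blast
    then show ?thesis
    proof cases
      case 1
      then show ?thesis using tuple_subset_component[of S A a t R] S t(1) a by blast
    next
      case (2 T)
      then have "set t \<subseteq> T" using tuple_subset_component[of T A a t R] SS t(1) a by blast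
      then show ?thesis using 2 by blast
    qed
  qed
  ultimately have "hom_K K (induced A (S \<union> \<Union>SS)) D
      = hom_K K (induced A S) D * hom_K K (induced A (\<Union>SS)) D"
    using hom_K_split[of S "\<Union>SS" "induced A (S \<union> \<Union>SS)" K D]
    by (simp add: induced_induced Int_absorb2 Int_absorb1)
  then show ?case using insert by simp
qed

lemma finite_components: "finite (adom A) \<Longrightarrow> finite (components A)"
  unfolding components_def
  using equiv_cooccur_trancl[of A] by (auto simp: equiv_def intro: finite_quotient)

lemma hom_K_prod_components:
  assumes "finite (adom A)" and "\<And>R. [] \<notin> A R"
  shows "hom_K K A D = (\<Prod>S\<in>components A. hom_K K (induced A S) D)"
proof -
  have "\<Union>(components A) = adom A"
    unfolding components_def using equiv_cooccur_trancl by (rule Union_quotient)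
  then show ?thesis
    using hom_K_induced_Union_components[OF assms(2) finite_components[OF assms(1)] subset_refl]
    by (simp add: induced_adom)
qed

lemma left_query_alg_refine:
  fixes C :: "('r, 'a) inst set"
  assumes alg: "left_query_alg sig ar K C k Fs X"
    and Gs: "distinct Gs" "\<forall>G\<in>set Gs. is_instance sig ar G"
    and determined: "\<And>D :: ('r, 'a) inst. is_instance sig ar D \<Longrightarrow>
           map (\<lambda>F. hom_K K F D) Fs = \<Phi> (map (\<lambda>G. hom_K K G D) Gs)"
  shows "left_query_alg sig ar K C (length Gs) Gs
           {y. length y = length Gs \<and> (K = KB \<longrightarrow> set y \<subseteq> {0, 1}) \<and> \<Phi> y \<in> X}"
proof -
  let ?Y = "{y. length y = length Gs \<and> (K = KB \<longrightarrow> set y \<subseteq> {0, 1}) \<and> \<Phi> y \<in> X}"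
  have "D \<in> C \<longleftrightarrow> map (\<lambda>G. hom_K K G D) Gs \<in> ?Y" if D: "is_instance sig ar D" for D
  proof -
    have "D \<in> C \<longleftrightarrow> map (\<lambda>F. hom_K K F D) Fs \<in> X"
      using alg D unfolding left_query_alg_def by blast
    moreover have "K = KB \<longrightarrow> set (map (\<lambda>G. hom_K K G D) Gs) \<subseteq> {0, 1}"
      by (auto simp: hom_K_def)
    ultimately show ?thesis using determined[OF D] by simp
  qed
  then show ?thesis
    using Gs unfolding left_query_alg_def by simp
qed

lemma finite_adom_instance:
  assumes "schema sig ar" "is_instance sig ar A"
  shows "finite (adom A)"
proof -
  have "adom A = (\<Union>R\<in>sig. \<Union>t\<in>A R. set t)"
    using assms(2) unfolding adom_def is_instance_def by auto
  then show ?thesis using assms unfolding schema_def is_instance_def by auto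
qed

lemma Nil_notin_instance:
  assumes "schema sig ar" "is_instance sig ar A"
  shows "[] \<notin> A R"
  using assms unfolding schema_def is_instance_def by (cases "R \<in> sig") fastforce+

lemma left_query_alg_connected:
  fixes C :: "('r, 'a) inst set"
  assumes "schema sig ar" and alg: "left_query_alg sig ar K C k Fs X"
  shows "\<exists>Gs Y. left_query_alg sig ar K C (length Gs) Gs Y \<and> Gs \<noteq> [] \<and>
                (\<forall>G\<in>set Gs. connected_inst G)"
proof -
  have Fs: "\<forall>F\<in>set Fs. is_instance sig ar F"
    using alg unfolding left_query_alg_def by blast
  then have "finite (components F)" if "F \<in> set Fs" for F
    using that finite_components finite_adom_instance[OF assms(1)] by blast
  txt \<open>The empty instance keeps the new list nonempty even if every instance in \<open>Fs\<close>
    is empty.\<close>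
  then obtain Gs where Gs: "set Gs = insert (\<lambda>R. {}) (\<Union>F\<in>set Fs. induced F ` components F)"
    and "distinct Gs"
    by (metis (no_types, lifting) finite_distinct_list finite_UN_I finite_imageI finite_insert finite_set)
  define look where "look y G = the (map_of (zip Gs y) G)" for y :: "nat list" and G
  have determined: "map (\<lambda>F. hom_K K F D) Fs =
        map (\<lambda>F. \<Prod>S\<in>components F. look (map (\<lambda>G. hom_K K G D) Gs) (induced F S)) Fs"
    for D :: "('r, 'a) inst"
  proof (rule map_cong[OF refl])
    fix F assume F: "F \<in> set Fs"
    have "look (map (\<lambda>G. hom_K K G D) Gs) (induced F S) = hom_K K (induced F S) D"
      if "S \<in> components F" for S
      using F that unfolding look_def map_of_zip_map Gs by auto
    then show "hom_K K F D = (\<Prod>S\<in>components F. look (map (\<lambda>G. hom_K K G D) Gs) (induced F S))"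
      using hom_K_prod_components finite_adom_instance[OF assms(1)] Nil_notin_instance[OF assms(1)]
        Fs F by (metis (no_types, lifting) prod.cong)
  qed
  have "is_instance sig ar (\<lambda>R. {})"
    by (simp add: is_instance_def)
  then have instances: "\<forall>G\<in>set Gs. is_instance sig ar G"
    using Fs unfolding Gs by (auto intro: is_instance_induced)
  have "connected_inst (\<lambda>R. {})"
    by (simp add: connected_inst_def adom_def)
  then have "\<forall>G\<in>set Gs. connected_inst G"
    unfolding Gs by (auto intro: connected_induced_component)
  moreover have "Gs \<noteq> []" using Gs by auto
  moreover have "left_query_alg sig ar K C (length Gs) Gs
      {y. length y = length Gs \<and> (K = KB \<longrightarrow> set y \<subseteq> {0, 1}) \<and>
          map (\<lambda>F. \<Prod>S\<in>components F. look y (induced F S)) Fs \<in> X}"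
    using determined by (intro left_query_alg_refine[OF alg \<open>distinct Gs\<close> instances])
  ultimately show ?thesis by blast
qed

theorem mainTheorem1:
  fixes sig :: "'r set" and ar :: "'r \<Rightarrow> nat" and K :: semiring_K
    and C :: "('r, 'a) inst set"
  assumes "schema sig ar"
    and "is_class sig ar C"
  shows "admits_left_query_alg sig ar K C \<longleftrightarrow>
         (\<exists>k>0. \<exists>Fs X. left_query_alg sig ar K C k Fs X \<and>
                        (\<forall>F\<in>set Fs. connected_inst F))"
proof
  assume "admits_left_query_alg sig ar K C"
  then obtain k Fs X where "left_query_alg sig ar K C k Fs X"
    unfolding admits_left_query_alg_def by blast
  then show "\<exists>k>0. \<exists>Fs X. left_query_alg sig ar K C k Fs X \<and> (\<forall>F\<in>set Fs. connected_inst F)"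
    using left_query_alg_connected[OF assms(1)] by (metis length_greater_0_conv)
qed (auto simp: admits_left_query_alg_def)

end
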